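(* The derivative test $\mathcal{D}$ is reasonable and error-free.
   Context: Let $\Omega=\{0,1\}$ and let $\Omega^\infty$ be the set of infinite sequences $\omega=(\omega_1,\omega_2,\dots)$; $\omega^t=(\omega_1,\dots,\omega_t)$ denotes the prefix and also the cylinder set $\{\hat\omega:\hat\omega^t=\omega^t\}$; $\Omega^\infty$ carries the $\sigma$-algebra generated by cylinders. $\Delta(\Omega)$ is the set of probability distributions on $\Omega$. A forecasting strategy is a function $f:\bigcup_{t\ge 0}(\Omega\times\Delta(\Omega)\times\Delta(\Omega))^t\to\Delta(\Omega)$; $F$ is the set of all forecasting strategies. For $f=(f_0,f_1)$ and $\omega$, the play path $h=h(\omega,f_0,f_1)$ is defined by $h^0=\emptyset$, $h^t=(h^{t-1},(\omega_t,f_0(h^{t-1}),f_1(h^{t-1})))$. The induced measures satisfy $P_i^f(\omega^t)=\prod_{n=1}^t f_i(h^{n-1})[\omega_n]$, $i\in\{0,1\}$. A comparison test is a function $T:\Omega^\infty\times F\times F\to\{0,\tfrac12,1\}$, measurable in $\omega$ for each fixed pair; write $\{T(\cdot,f)=k\}=\{\omega:T(\omega,f_0,f_1)=k\}$. $T$ is error-free if for all $f$ and $i\in\{0,1\}$, $P_{1-i}^f(\{T(\cdot,f)=i\})=0$. $T$ is reasonable if for all $f$, $i\in\{0,1\}$ and measurable $A$: $P_i^f(A)>0$ and $P_{1-i}^f(A)=0$ imply $P_i^f(A\cap\{T(\cdot,f)=i\})>0$. Likelihood ratios (all along the play path $h=h(\omega,f_0,f_1)$): $D^t_{f_0}f_1(\omega)=\prod_{n=1}^t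 \frac{f_1(h^{n-1})[\omega_n]}{f_0(h^{n-1})[\omega_n]}$ and $D^t_{f_1}f_0(\omega)=\prod_{n=1}^t \frac{f_0(h^{n-1})[\omega_n]}{f_1(h^{n-1})[\omega_n]}$. For $(j,k)\in\{(0,1),(1,0)\}$, $\overline{D}_{f_j}f_k(\omega)=\limsup_t D^t_{f_j}f_k(\omega)$ and $\underline{D}_{f_j}f_k(\omega)=\liminf_t D^t_{f_j}f_k(\omega)$ if $f_j(h^{n-1})[\omega_n]>0$ for all $n$, and both equal $+\infty$ otherwise; if they coincide and are finite, the common value is the derivative $D_{f_j}f_k(\omega)$. The derivative test is $\mathcal{D}(\omega,f_0,f_1)=1$ if $D_{f_1}f_0(\omega)$ exists and equals $0$; $=0$ if $D_{f_0}f_1(\omega)$ exists and equals $0$; and $=\tfrac12$ otherwise. *)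

theory Defs
  imports "HOL-Probability.Probability"
begin

text \<open>Outcomes: Omega = {0,1} is rendered as bool (False = 0, True = 1).
  Infinite sequences omega_1, omega_2, ... are functions nat => bool, with omega_n stored at index n-1.
  Distributions on Omega are bool pmfs. A history is a list of triples (outcome, forecast 0, forecast 1).\<close>

type_synonym hist = "(bool \<times> bool pmf \<times> bool pmf) list"
type_synonym strategy = "hist \<Rightarrow> bool pmf"
type_synonym seq = "nat \<Rightarrow> bool"

fun play :: "strategy \<Rightarrow> strategy \<Rightarrow> seq \<Rightarrow> nat \<Rightarrow> hist" where
  "play f0 f1 w 0 = []"
| "play f0 f1 w (Suc t) = play f0 f1 w t @ [(w t, f0 (play f0 f1 w t), f1 (play f0 f1 w t))]"

definition strat :: "nat \<Rightarrow> strategy \<Rightarrow> strategy \<Rightarrow> strategy" where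
  "strat i f0 f1 = (if i = 0 then f0 else f1)"

text \<open>The measurable space Omega^infinity with the sigma-algebra generated by cylinders
  (= the product sigma-algebra of discrete factors).\<close>
definition Omega_inf :: "seq measure" where
  "Omega_inf = PiM UNIV (\<lambda>_::nat. count_space (UNIV :: bool set))"

definition cyl :: "seq \<Rightarrow> nat \<Rightarrow> seq set" where
  "cyl w t = {w' \<in> space Omega_inf. \<forall>n<t. w' n = w n}"

definition induced_measure :: "strategy \<Rightarrow> strategy \<Rightarrow> nat \<Rightarrow> seq measure \<Rightarrow> bool" where
  "induced_measure f0 f1 i P \<longleftrightarrow>
     sets P = sets Omega_inf \<and> prob_space P \<and>
     (\<forall>w t. emeasure P (cyl w t) =
        ennreal (\<Prod>n<t. pmf (strat i f0 f1 (play f0 f1 w n)) (w n)))"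

definition lratio :: "strategy \<Rightarrow> strategy \<Rightarrow> nat \<Rightarrow> nat \<Rightarrow> seq \<Rightarrow> nat \<Rightarrow> real" where
  "lratio f0 f1 j k w t =
     (\<Prod>n<t. pmf (strat k f0 f1 (play f0 f1 w n)) (w n) / pmf (strat j f0 f1 (play f0 f1 w n)) (w n))"

definition upperD :: "strategy \<Rightarrow> strategy \<Rightarrow> nat \<Rightarrow> nat \<Rightarrow> seq \<Rightarrow> ereal" where
  "upperD f0 f1 j k w =
     (if \<forall>n. pmf (strat j f0 f1 (play f0 f1 w n)) (w n) > 0
      then limsup (\<lambda>t. ereal (lratio f0 f1 j k w t)) else \<infinity>)"

definition lowerD :: "strategy \<Rightarrow> strategy \<Rightarrow> nat \<Rightarrow> nat \<Rightarrow> seq \<Rightarrow> ereal" where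
  "lowerD f0 f1 j k w =
     (if \<forall>n. pmf (strat j f0 f1 (play f0 f1 w n)) (w n) > 0
      then liminf (\<lambda>t. ereal (lratio f0 f1 j k w t)) else \<infinity>)"

definition deriv_exists :: "strategy \<Rightarrow> strategy \<Rightarrow> nat \<Rightarrow> nat \<Rightarrow> seq \<Rightarrow> bool" where
  "deriv_exists f0 f1 j k w \<longleftrightarrow>
     upperD f0 f1 j k w = lowerD f0 f1 j k w \<and> \<bar>upperD f0 f1 j k w\<bar> \<noteq> \<infinity>"

definition deriv :: "strategy \<Rightarrow> strategy \<Rightarrow> nat \<Rightarrow> nat \<Rightarrow> seq \<Rightarrow> real" where
  "deriv f0 f1 j k w = real_of_ereal (upperD f0 f1 j k w)"

definition derivative_test :: "seq \<Rightarrow> strategy \<Rightarrow> strategy \<Rightarrow> real" where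
  "derivative_test w f0 f1 =
     (if deriv_exists f0 f1 1 0 w \<and> deriv f0 f1 1 0 w = 0 then 1
      else if deriv_exists f0 f1 0 1 w \<and> deriv f0 f1 0 1 w = 0 then 0
      else 1/2)"

definition comparison_test :: "(seq \<Rightarrow> strategy \<Rightarrow> strategy \<Rightarrow> real) \<Rightarrow> bool" where
  "comparison_test T \<longleftrightarrow>
     (\<forall>f0 f1. (\<lambda>w. T w f0 f1) \<in> Omega_inf \<rightarrow>\<^sub>M count_space UNIV \<and>
              (\<forall>w. T w f0 f1 \<in> {0, 1/2, 1}))"

definition error_free ::
  "(strategy \<Rightarrow> strategy \<Rightarrow> nat \<Rightarrow> seq measure) \<Rightarrow> (seq \<Rightarrow> strategy \<Rightarrow> strategy \<Rightarrow> real) \<Rightarrow> bool" where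
  "error_free P T \<longleftrightarrow>
     (\<forall>f0 f1. \<forall>i\<in>{0,1}.
        emeasure (P f0 f1 (1 - i)) {w \<in> space Omega_inf. T w f0 f1 = real i} = 0)"

definition reasonable ::
  "(strategy \<Rightarrow> strategy \<Rightarrow> nat \<Rightarrow> seq measure) \<Rightarrow> (seq \<Rightarrow> strategy \<Rightarrow> strategy \<Rightarrow> real) \<Rightarrow> bool" where
  "reasonable P T \<longleftrightarrow>
     (\<forall>f0 f1. \<forall>i\<in>{0,1}. \<forall>A\<in>sets Omega_inf.
        emeasure (P f0 f1 i) A > 0 \<longrightarrow> emeasure (P f0 f1 (1 - i)) A = 0 \<longrightarrow>
        emeasure (P f0 f1 i) (A \<inter> {w \<in> space Omega_inf. T w f0 f1 = real i}) > 0)"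

end

theory Submission
  imports Defs
begin

text \<open>
  Fix forecasts f_j, f_k and write L_t for the likelihood ratio D^t_{f_j} f_k along the play.
  On events determined by the first t outcomes on which the forecasts of f_j are positive,
  P_k has density L_t with respect to P_j.

  Error-freeness: where D_{f_j} f_k = 0, eventually L_t < e; but P_k {L_t < e} \<le> e P_j {L_t < e} \<le> e,
  so the set where D_{f_j} f_k = 0 has P_k-measure at most e for every e > 0.

  Reasonableness: splitting at the first time L_t exceeds e gives Ville's maximal inequality
  e P_j (B \<inter> {L_t > e infinitely often}) \<le> P_k B, first for cylinder events B and then, by
  approximating B with cylinders simultaneously for both measures, for all measurable B.
  Hence, if P_k A = 0, then L_t \<rightarrow> 0 P_j-almost surely on A; together with the first part
  (with the roles exchanged), the test returns j P_j-almost everywhere on A.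
\<close>

definition prefix_determined :: "nat \<Rightarrow> (seq \<Rightarrow> 'b) \<Rightarrow> bool" where
  "prefix_determined n h \<longleftrightarrow> (\<forall>w w'. (\<forall>k<n. w k = w' k) \<longrightarrow> h w = h w')"

definition seq_of_list :: "bool list \<Rightarrow> seq" where
  "seq_of_list xs = (\<lambda>k. if k < length xs then xs ! k else False)"

lemma space_Omega_inf [simp]: "space Omega_inf = UNIV"
  by (simp add: Omega_inf_def space_PiM)

lemma prefix_determined_mono: "prefix_determined n h \<Longrightarrow> n \<le> m \<Longrightarrow> prefix_determined m h"
  unfolding prefix_determined_def by auto

lemma map_upt_eq_iff: "map w [0..<n] = xs \<longleftrightarrow> length xs = n \<and> (\<forall>k<n. w k = xs ! k)"
  by (auto simp: list_eq_iff_nth_eq)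

lemma measurable_prefix: "(\<lambda>w. map w [0..<n]) \<in> Omega_inf \<rightarrow>\<^sub>M count_space UNIV"
proof (subst measurable_count_space_eq2_countable, intro conjI ballI)
  fix xs :: "bool list"
  have "(\<lambda>w. map w [0..<n]) -` {xs} \<inter> space Omega_inf =
     (if length xs = n then {w \<in> space Omega_inf. \<forall>k<n. w k = xs ! k} else {})"
    by (auto simp: map_upt_eq_iff)
  moreover have "{w \<in> space Omega_inf. \<forall>k<n. w k = xs ! k} \<in> sets Omega_inf"
    unfolding Omega_inf_def by measurable
  ultimately show "(\<lambda>w. map w [0..<n]) -` {xs} \<inter> space Omega_inf \<in> sets Omega_inf"
    by auto
qed auto

lemma measurable_prefix_determined:
  assumes "prefix_determined n h" and "\<And>w. h w \<in> space N"
  shows "h \<in> Omega_inf \<rightarrow>\<^sub>M N"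
proof -
  have "h w = h (seq_of_list (map w [0..<n]))" for w
    using assms(1) unfolding prefix_determined_def by (simp add: seq_of_list_def)
  then have h_eq: "h = (\<lambda>xs. h (seq_of_list xs)) \<circ> (\<lambda>w. map w [0..<n])"
    by auto
  have "(\<lambda>xs. h (seq_of_list xs)) \<in> count_space UNIV \<rightarrow>\<^sub>M N"
    using assms(2) by (simp add: measurable_count_space_eq1)
  then show ?thesis
    by (subst h_eq) (rule measurable_comp[OF measurable_prefix])
qed

lemma sets_prefix_determined:
  assumes "prefix_determined n (\<lambda>w. w \<in> B)"
  shows "B \<in> sets Omega_inf"
proof -
  have "(\<lambda>w. w \<in> B) \<in> Omega_inf \<rightarrow>\<^sub>M count_space UNIV"
    by (rule measurable_prefix_determined[OF assms]) auto
  then have "{w \<in> space Omega_inf. w \<in> B} \<in> sets Omega_inf"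
    by measurable
  then show ?thesis by simp
qed

lemma cyl_eq: "cyl w t = {w'. \<forall>n<t. w' n = w n}"
  by (simp add: cyl_def)

lemma prefix_determined_cyl: "prefix_determined t (\<lambda>w'. w' \<in> cyl w t)"
  by (simp add: cyl_eq prefix_determined_def)

lemma disjoint_family_on_cyl:
  "disjoint_family_on (\<lambda>xs. cyl (seq_of_list xs) t) {xs. length xs = t}"
  unfolding disjoint_family_on_def
proof (intro ballI impI)
  fix xs ys :: "bool list"
  assume "xs \<in> {xs. length xs = t}" "ys \<in> {xs. length xs = t}" "xs \<noteq> ys"
  then obtain k where "k < t" "xs ! k \<noteq> ys ! k" "length xs = t" "length ys = t"
    by (auto simp: list_eq_iff_nth_eq)
  then show "cyl (seq_of_list xs) t \<inter> cyl (seq_of_list ys) t = {}"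
    by (auto simp: cyl_eq seq_of_list_def)
qed

lemma prefix_determined_eq_UN_cyl:
  assumes D: "prefix_determined t (\<lambda>w. w \<in> D)"
  shows "D = (\<Union>xs\<in>{xs. length xs = t \<and> seq_of_list xs \<in> D}. cyl (seq_of_list xs) t)"
proof (intro equalityI subsetI)
  fix w assume "w \<in> D"
  moreover have "\<forall>k<t. seq_of_list (map w [0..<t]) k = w k"
    by (simp add: seq_of_list_def)
  ultimately have "seq_of_list (map w [0..<t]) \<in> D"
    using D unfolding prefix_determined_def by metis
  moreover have "w \<in> cyl (seq_of_list (map w [0..<t])) t"
    by (simp add: cyl_eq seq_of_list_def)
  ultimately show "w \<in> (\<Union>xs\<in>{xs. length xs = t \<and> seq_of_list xs \<in> D}. cyl (seq_of_list xs) t)"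
    by (intro UN_I[of "map w [0..<t]"]) auto
next
  fix w assume "w \<in> (\<Union>xs\<in>{xs. length xs = t \<and> seq_of_list xs \<in> D}. cyl (seq_of_list xs) t)"
  then obtain xs where "seq_of_list xs \<in> D" "\<forall>n<t. w n = seq_of_list xs n"
    by (auto simp: cyl_eq)
  then show "w \<in> D"
    using D unfolding prefix_determined_def by metis
qed

definition cylinder_sets :: "seq set set" where
  "cylinder_sets = {C. \<exists>n. prefix_determined n (\<lambda>w. w \<in> C)}"

lemma algebra_cylinder_sets: "algebra UNIV cylinder_sets"
  unfolding algebra_iff_Un
proof (intro conjI ballI)
  fix a b assume "a \<in> cylinder_sets" "b \<in> cylinder_sets"
  then obtain n m where "prefix_determined n (\<lambda>w. w \<in> a)" "prefix_determined m (\<lambda>w. w \<in> b)"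
    by (auto simp: cylinder_sets_def)
  then have "prefix_determined (n + m) (\<lambda>w. w \<in> a)" "prefix_determined (n + m) (\<lambda>w. w \<in> b)"
    by (auto intro: prefix_determined_mono)
  then have "prefix_determined (n + m) (\<lambda>w. w \<in> a \<union> b)"
    unfolding prefix_determined_def by blast
  then show "a \<union> b \<in> cylinder_sets"
    by (auto simp: cylinder_sets_def)
qed (auto simp: cylinder_sets_def prefix_determined_def)

lemma sets_Omega_inf_sigma_cylinder_sets: "sets Omega_inf = sigma_sets UNIV cylinder_sets"
proof (rule antisym)
  have "sets Omega_inf = sigma_sets UNIV {{f. f i \<in> A} | i A. True}"
    unfolding Omega_inf_def sets_PiM_single by simp
  also have "\<dots> \<subseteq> sigma_sets UNIV cylinder_sets"
  proof (rule sigma_sets_subseteq, safe)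
    fix i :: nat and A :: "bool set"
    have "prefix_determined (Suc i) (\<lambda>w. w \<in> {f. f i \<in> A})"
      unfolding prefix_determined_def by auto
    then show "{f. f i \<in> A} \<in> cylinder_sets"
      unfolding cylinder_sets_def by blast
  qed
  finally show "sets Omega_inf \<subseteq> sigma_sets UNIV cylinder_sets" .
  have "cylinder_sets \<subseteq> sets Omega_inf"
    unfolding cylinder_sets_def using sets_prefix_determined by auto
  then show "sigma_sets UNIV cylinder_sets \<subseteq> sets Omega_inf"
    using sets.sigma_sets_subset[of cylinder_sets Omega_inf] by simp
qed

lemma (in finite_measure) eventually_measure_Union_diff_less:
  assumes "range A \<subseteq> sets M" and "0 < d"
  shows "eventually (\<lambda>N. measure M ((\<Union>i. A i) - (\<Union>i<N. A i)) < d) sequentially"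
proof -
  have "incseq (\<lambda>N. \<Union>i<N. A i)"
    unfolding incseq_def by (intro allI impI UN_mono) auto
  moreover have "(\<Union>N. \<Union>i<N. A i) = (\<Union>i. A i)"
    by blast
  ultimately have "(\<lambda>N. measure M (\<Union>i<N. A i)) \<longlonglongrightarrow> measure M (\<Union>i. A i)"
    using assms(1) finite_Lim_measure_incseq[of "\<lambda>N. \<Union>i<N. A i"] by fastforce
  then have "(\<lambda>N. measure M (\<Union>i. A i) - measure M (\<Union>i<N. A i))
      \<longlonglongrightarrow> measure M (\<Union>i. A i) - measure M (\<Union>i. A i)"
    by (intro tendsto_diff tendsto_const)
  then have "eventually (\<lambda>N. measure M (\<Union>i. A i) - measure M (\<Union>i<N. A i) < d) sequentially"
    using assms(2) by (intro order_tendstoD(2)) auto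
  moreover have "measure M ((\<Union>i. A i) - (\<Union>i<N. A i)) = measure M (\<Union>i. A i) - measure M (\<Union>i<N. A i)" for N
    using assms(1) by (intro finite_measure_Diff) auto
  ultimately show ?thesis by simp
qed

lemma (in finite_measure) measure_sym_diff_UN_less:
  assumes A: "range A \<subseteq> sets M" and C: "range C \<subseteq> sets M"
    and tail: "measure M ((\<Union>i. A i) - (\<Union>i<N. A i)) < d / 2"
    and each: "\<And>i. measure M (sym_diff (A i) (C i)) < d / (2 * (real N + 1))"
  shows "measure M (sym_diff (\<Union>i. A i) (\<Union>i<N. C i)) < d"
proof -
  have "0 < d / (2 * (real N + 1))"
    using each[of 0] measure_nonneg[of M "sym_diff (A 0) (C 0)"] by linarith
  then have d: "0 < d"
    by (simp add: zero_less_divide_iff add_pos_nonneg)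
  have tail_sets: "(\<Union>i. A i) - (\<Union>i<N. A i) \<in> sets M"
    using A by auto
  have "measure M (sym_diff (\<Union>i. A i) (\<Union>i<N. C i))
      \<le> measure M (((\<Union>i. A i) - (\<Union>i<N. A i)) \<union> (\<Union>i<N. sym_diff (A i) (C i)))"
    using A C tail_sets by (intro finite_measure_mono) auto
  also have "\<dots> \<le> measure M ((\<Union>i. A i) - (\<Union>i<N. A i)) + measure M (\<Union>i<N. sym_diff (A i) (C i))"
    using A C tail_sets by (intro measure_Un_le) auto
  also have "measure M (\<Union>i<N. sym_diff (A i) (C i)) \<le> (\<Sum>i<N. measure M (sym_diff (A i) (C i)))"
    using A C by (intro finite_measure_subadditive_finite) auto
  also have "\<dots> \<le> real N * (d / (2 * (real N + 1)))"
    using sum_bounded_above[of "{..<N}" "\<lambda>i. measure M (sym_diff (A i) (C i))" "d / (2 * (real N + 1))"] each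
    by (simp add: less_imp_le)
  also have "\<dots> \<le> d / 2"
    using d by (simp add: field_simps)
  finally show ?thesis
    using tail by simp
qed

lemma (in finite_measure) measure_le_add_measure_sym_diff:
  assumes "A \<in> sets M" and "B \<in> sets M"
  shows "measure M A \<le> measure M B + measure M (sym_diff A B)"
proof -
  have "measure M A \<le> measure M (B \<union> sym_diff A B)"
    using assms by (intro finite_measure_mono) auto
  also have "\<dots> \<le> measure M B + measure M (sym_diff A B)"
    using assms by (intro measure_Un_le) auto
  finally show ?thesis .
qed

lemma approx_UN_by_algebra:
  fixes M N :: "'a measure" and A :: "nat \<Rightarrow> 'a set"
  assumes G: "algebra \<Omega> G" and M: "finite_measure M" and N: "finite_measure N"
    and sets: "range A \<subseteq> sets M" "range A \<subseteq> sets N" "G \<subseteq> sets M" "G \<subseteq> sets N"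
    and approx: "\<And>i e. 0 < e \<Longrightarrow>
      \<exists>C\<in>G. measure M (sym_diff (A i) C) < e \<and> measure N (sym_diff (A i) C) < e"
    and d: "0 < d"
  shows "\<exists>C\<in>G. measure M (sym_diff (\<Union>i. A i) C) < d \<and> measure N (sym_diff (\<Union>i. A i) C) < d"
proof -
  interpret G: algebra \<Omega> G by (rule G)
  interpret M: finite_measure M by (rule M)
  interpret N: finite_measure N by (rule N)
  have "eventually (\<lambda>n. measure M ((\<Union>i. A i) - (\<Union>i<n. A i)) < d / 2 \<and>
      measure N ((\<Union>i. A i) - (\<Union>i<n. A i)) < d / 2) sequentially"
    using sets d by (intro eventually_conj M.eventually_measure_Union_diff_less
        N.eventually_measure_Union_diff_less) auto
  then obtain n where tailM: "measure M ((\<Union>i. A i) - (\<Union>i<n. A i)) < d / 2"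
      and tailN: "measure N ((\<Union>i. A i) - (\<Union>i<n. A i)) < d / 2"
    unfolding eventually_sequentially by blast
  have "\<forall>i. \<exists>C\<in>G. measure M (sym_diff (A i) C) < d / (2 * (real n + 1))
      \<and> measure N (sym_diff (A i) C) < d / (2 * (real n + 1))"
    using approx d by simp
  then obtain C where C: "\<And>i. C i \<in> G"
      "\<And>i. measure M (sym_diff (A i) (C i)) < d / (2 * (real n + 1))"
      "\<And>i. measure N (sym_diff (A i) (C i)) < d / (2 * (real n + 1))"
    by metis
  have "measure M (sym_diff (\<Union>i. A i) (\<Union>i<n. C i)) < d"
    and "measure N (sym_diff (\<Union>i. A i) (\<Union>i<n. C i)) < d"
    using sets tailM tailN C
    by (auto intro!: M.measure_sym_diff_UN_less N.measure_sym_diff_UN_less)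
  moreover have "(\<Union>i<n. C i) \<in> G"
    using C(1) by auto
  ultimately show ?thesis
    by blast
qed

lemma approx_sigma_sets_by_algebra:
  fixes M N :: "'a measure"
  assumes G: "algebra \<Omega> G"
    and M: "finite_measure M" "sets M = sigma_sets \<Omega> G"
    and N: "finite_measure N" "sets N = sigma_sets \<Omega> G"
    and B: "B \<in> sigma_sets \<Omega> G" and d: "0 < d"
  shows "\<exists>C\<in>G. measure M (sym_diff B C) < d \<and> measure N (sym_diff B C) < d"
proof -
  interpret G: algebra \<Omega> G by (rule G)
  have "\<forall>d>0. \<exists>C\<in>G. measure M (sym_diff B C) < d \<and> measure N (sym_diff B C) < d"
    using G.Int_stable G.space_closed B
  proof (induct B rule: sigma_sets_induct_disjoint)
    case (basic A)
    then show ?case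
      by (intro allI impI bexI[of _ A]) auto
  next
    case empty
    then show ?case
      by (intro allI impI bexI[of _ "{}"]) auto
  next
    case (compl A)
    show ?case
    proof (intro allI impI)
      fix d :: real assume "0 < d"
      then obtain C where C: "C \<in> G" "measure M (sym_diff A C) < d" "measure N (sym_diff A C) < d"
        using compl(2) by blast
      have "sym_diff (\<Omega> - A) (\<Omega> - C) = sym_diff A C"
        using sigma_sets_into_sp[OF G.space_closed compl(1)] G.sets_into_space[OF C(1)] by blast
      then show "\<exists>C\<in>G. measure M (sym_diff (\<Omega> - A) C) < d \<and> measure N (sym_diff (\<Omega> - A) C) < d"
        using C by (intro bexI[of _ "\<Omega> - C"]) auto
    qed
  next
    case (union A)
    then show ?case
      using M N by (intro allI impI approx_UN_by_algebra[OF G M(1) N(1)]) auto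
  qed
  then show ?thesis
    using d by blast
qed

text \<open>For p, q the probabilities of the realized outcomes under f_j, f_k (see outcome_prob below),
  likelihood_ratio p q w t is D^t_{f_j} f_k (w), and likelihood_ratio_vanishes p q w says that
  the derivative D_{f_j} f_k (w) exists and equals 0.\<close>

definition likelihood_ratio :: "(seq \<Rightarrow> nat \<Rightarrow> real) \<Rightarrow> (seq \<Rightarrow> nat \<Rightarrow> real) \<Rightarrow> seq \<Rightarrow> nat \<Rightarrow> real" where
  "likelihood_ratio p q w t = (\<Prod>n<t. q w n / p w n)"

definition likelihood_ratio_vanishes :: "(seq \<Rightarrow> nat \<Rightarrow> real) \<Rightarrow> (seq \<Rightarrow> nat \<Rightarrow> real) \<Rightarrow> seq \<Rightarrow> bool" where
  "likelihood_ratio_vanishes p q w \<longleftrightarrow> (\<forall>n. 0 < p w n) \<and> likelihood_ratio p q w \<longlonglongrightarrow> 0"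

lemma prod_eq_likelihood_ratio_mult:
  assumes "\<forall>n<t. 0 < p w n"
  shows "(\<Prod>n<t. q w n) = likelihood_ratio p q w t * (\<Prod>n<t. p w n)"
  unfolding likelihood_ratio_def prod.distrib[symmetric]
  by (rule prod.cong) (use assms in auto)

lemma scaled_prod_le_if_likelihood_ratio_gt:
  assumes "e < likelihood_ratio p q w t" and "0 \<le> e"
    and "\<And>n. 0 \<le> p w n" and "\<And>n. 0 \<le> q w n"
  shows "e * (\<Prod>n<t. p w n) \<le> (\<Prod>n<t. q w n)"
proof (cases "\<forall>n<t. 0 < p w n")
  case True
  have "e * (\<Prod>n<t. p w n) \<le> likelihood_ratio p q w t * (\<Prod>n<t. p w n)"
    using assms by (intro mult_right_mono prod_nonneg) auto
  then show ?thesis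
    using prod_eq_likelihood_ratio_mult[of t p w q] True by simp
next
  case False
  then obtain n where "n < t" and "\<not> 0 < p w n"
    by blast
  then have "p w n = 0"
    using assms(3)[of n] by linarith
  with \<open>n < t\<close> have "(\<Prod>n<t. p w n) = 0"
    by (intro prod_zero) auto
  moreover have "0 \<le> (\<Prod>n<t. q w n)"
    using assms(4) by (intro prod_nonneg) auto
  ultimately show ?thesis
    by (simp del: prod_zero_iff)
qed

lemma prefix_determined_likelihood_ratio:
  assumes "\<And>n. prefix_determined (Suc n) (\<lambda>w. p w n)"
    and "\<And>n. prefix_determined (Suc n) (\<lambda>w. q w n)"
  shows "prefix_determined t (\<lambda>w. likelihood_ratio p q w t)"
  unfolding prefix_determined_def likelihood_ratio_def
proof (intro allI impI prod.cong refl)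
  fix w w' :: seq and n assume "\<forall>k<t. w k = w' k" and "n \<in> {..<t}"
  then have "\<forall>k<Suc n. w k = w' k"
    by auto
  then have "p w n = p w' n" and "q w n = q w' n"
    using assms[of n] unfolding prefix_determined_def by blast+
  then show "q w n / p w n = q w' n / p w' n"
    by simp
qed

lemma LIMSEQ_zero_iff_eventually_le_inverse_Suc:
  fixes X :: "nat \<Rightarrow> real"
  shows "X \<longlonglongrightarrow> 0 \<longleftrightarrow> (\<forall>r. \<forall>\<^sub>\<infinity>t. \<bar>X t\<bar> \<le> inverse (Suc r))"
proof
  assume lim: "X \<longlonglongrightarrow> 0"
  show "\<forall>r. \<forall>\<^sub>\<infinity>t. \<bar>X t\<bar> \<le> inverse (Suc r)"
  proof
    fix r :: nat
    obtain m where "\<forall>t\<ge>m. norm (X t - 0) < inverse (Suc r)"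
      using LIMSEQ_D[OF lim, of "inverse (Suc r)"] by auto
    then show "\<forall>\<^sub>\<infinity>t. \<bar>X t\<bar> \<le> inverse (Suc r)"
      unfolding MOST_nat_le by (auto intro: less_imp_le)
  qed
next
  assume bound: "\<forall>r. \<forall>\<^sub>\<infinity>t. \<bar>X t\<bar> \<le> inverse (Suc r)"
  show "X \<longlonglongrightarrow> 0"
  proof (rule LIMSEQ_I)
    fix d :: real assume "0 < d"
    then obtain r where r: "inverse (Suc r) < d"
      using reals_Archimedean by blast
    obtain m where m: "\<forall>t\<ge>m. \<bar>X t\<bar> \<le> inverse (Suc r)"
      using bound unfolding MOST_nat_le by blast
    show "\<exists>m. \<forall>t\<ge>m. norm (X t - 0) < d"
    proof (intro exI allI impI)
      fix t assume "m \<le> t"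
      then show "norm (X t - 0) < d"
        using m r by fastforce
    qed
  qed
qed

lemma measurable_likelihood_ratio_vanishes:
  assumes [measurable]: "\<And>n. (\<lambda>w. p w n) \<in> borel_measurable Omega_inf"
    and [measurable]: "\<And>n. (\<lambda>w. q w n) \<in> borel_measurable Omega_inf"
  shows "Measurable.pred Omega_inf (likelihood_ratio_vanishes p q)"
proof -
  have [measurable]: "(\<lambda>w. likelihood_ratio p q w t) \<in> borel_measurable Omega_inf" for t
    unfolding likelihood_ratio_def by measurable
  show ?thesis
    unfolding likelihood_ratio_vanishes_def LIMSEQ_zero_iff_eventually_le_inverse_Suc MOST_nat_le
    by measurable
qed

text \<open>p w n is the probability that the forecast made after the history w 0, ..., w (n - 1) assigns
  to the realized outcome w n; M is the measure on sequences induced by these forecasts.\<close>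

locale forecast_measure = prob_space M for M :: "seq measure" +
  fixes p :: "seq \<Rightarrow> nat \<Rightarrow> real"
  assumes sets_eq: "sets M = sets Omega_inf"
    and nonneg: "0 \<le> p w n"
    and prefix_determined: "prefix_determined (Suc n) (\<lambda>w. p w n)"
    and emeasure_cyl: "emeasure M (cyl w t) = ennreal (\<Prod>n<t. p w n)"
begin

lemma measurable_p [measurable]: "(\<lambda>w. p w n) \<in> borel_measurable Omega_inf"
  by (rule measurable_prefix_determined[OF prefix_determined]) auto

lemma emeasure_prefix_determined:
  assumes D: "prefix_determined t (\<lambda>w. w \<in> D)"
  shows "emeasure M D =
    (\<Sum>xs | length xs = t \<and> seq_of_list xs \<in> D. ennreal (\<Prod>n<t. p (seq_of_list xs) n))"
proof -
  let ?I = "{xs. length xs = t \<and> seq_of_list xs \<in> D}"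
  have "finite ?I"
    by (rule finite_subset[OF _ finite_lists_length_eq[of "UNIV :: bool set" t]]) auto
  moreover have "disjoint_family_on (\<lambda>xs. cyl (seq_of_list xs) t) ?I"
    by (rule disjoint_family_on_mono[OF _ disjoint_family_on_cyl]) auto
  moreover have "cyl (seq_of_list xs) t \<in> sets M" for xs
    unfolding sets_eq by (rule sets_prefix_determined[OF prefix_determined_cyl])
  ultimately have "emeasure M D = (\<Sum>xs\<in>?I. emeasure M (cyl (seq_of_list xs) t))"
    by (subst prefix_determined_eq_UN_cyl[OF D], intro sum_emeasure[symmetric]) auto
  then show ?thesis
    by (simp add: emeasure_cyl)
qed

lemma null_sets_zero: "{w. p w n = 0} \<in> null_sets M"
proof -
  have D: "prefix_determined (Suc n) (\<lambda>w. w \<in> {w. p w n = 0})"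
    using prefix_determined[of n] unfolding prefix_determined_def mem_Collect_eq by metis
  have "emeasure M {w. p w n = 0} = 0"
    unfolding emeasure_prefix_determined[OF D] by (auto intro!: sum.neutral prod_zero)
  then show ?thesis
    using sets_prefix_determined[OF D] sets_eq by auto
qed

end

lemma scaled_emeasure_le_prefix_determined:
  assumes M: "forecast_measure M p" and N: "forecast_measure N q"
    and D: "prefix_determined t (\<lambda>w. w \<in> D)" and "0 \<le> a" "0 \<le> b"
    and le: "\<And>w. w \<in> D \<Longrightarrow> a * (\<Prod>n<t. p w n) \<le> b * (\<Prod>n<t. q w n)"
  shows "ennreal a * emeasure M D \<le> ennreal b * emeasure N D"
proof -
  interpret M: forecast_measure M p by (rule M)
  interpret N: forecast_measure N q by (rule N)
  let ?I = "{xs. length xs = t \<and> seq_of_list xs \<in> D}"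
  have "ennreal a * emeasure M D = (\<Sum>xs\<in>?I. ennreal (a * (\<Prod>n<t. p (seq_of_list xs) n)))"
    unfolding M.emeasure_prefix_determined[OF D] sum_distrib_left
    using \<open>0 \<le> a\<close> by (intro sum.cong) (auto simp: ennreal_mult prod_nonneg M.nonneg)
  also have "\<dots> \<le> (\<Sum>xs\<in>?I. ennreal (b * (\<Prod>n<t. q (seq_of_list xs) n)))"
    by (intro sum_mono ennreal_leI le) auto
  also have "\<dots> = ennreal b * emeasure N D"
    unfolding N.emeasure_prefix_determined[OF D] sum_distrib_left
    using \<open>0 \<le> b\<close> by (intro sum.cong) (auto simp: ennreal_mult prod_nonneg N.nonneg)
  finally show ?thesis .
qed

locale forecast_pair = P: forecast_measure Mp p + Q: forecast_measure Mq q
  for Mp p Mq q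
begin

lemma measurable_likelihood_ratio [measurable]:
  "(\<lambda>w. likelihood_ratio p q w t) \<in> borel_measurable Omega_inf"
  by (rule measurable_prefix_determined[OF
        prefix_determined_likelihood_ratio[OF P.prefix_determined Q.prefix_determined]]) auto

lemma likelihood_ratio_nonneg: "0 \<le> likelihood_ratio p q w t"
  unfolding likelihood_ratio_def by (intro prod_nonneg divide_nonneg_nonneg P.nonneg Q.nonneg)

lemma sets_likelihood_ratio_vanishes:
  "{w. likelihood_ratio_vanishes p q w} \<in> sets Omega_inf"
proof -
  have [measurable]: "Measurable.pred Omega_inf (likelihood_ratio_vanishes p q)"
    by (intro measurable_likelihood_ratio_vanishes P.measurable_p Q.measurable_p)
  have "{w \<in> space Omega_inf. likelihood_ratio_vanishes p q w} \<in> sets Omega_inf"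
    by measurable
  then show ?thesis
    by simp
qed

lemma prefix_determined_likelihood_ratio_less:
  "prefix_determined t (\<lambda>w. w \<in> {w. (\<forall>n<t. 0 < p w n) \<and> likelihood_ratio p q w t < e})"
  using prefix_determined_likelihood_ratio[OF P.prefix_determined Q.prefix_determined, of t]
    P.prefix_determined
  unfolding prefix_determined_def by (smt (verit) Suc_leI mem_Collect_eq order_less_le_trans)

lemma emeasure_likelihood_ratio_less_le:
  assumes "0 \<le> e"
  shows "emeasure Mq {w. (\<forall>n<t. 0 < p w n) \<and> likelihood_ratio p q w t < e} \<le> ennreal e"
proof -
  let ?D = "{w. (\<forall>n<t. 0 < p w n) \<and> likelihood_ratio p q w t < e}"
  have "ennreal 1 * emeasure Mq ?D \<le> ennreal e * emeasure Mp ?D"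
    using prefix_determined_likelihood_ratio_less
  proof (rule scaled_emeasure_le_prefix_determined[OF Q.forecast_measure_axioms P.forecast_measure_axioms])
    fix w assume w: "w \<in> ?D"
    then have "(\<Prod>n<t. q w n) = likelihood_ratio p q w t * (\<Prod>n<t. p w n)"
      by (intro prod_eq_likelihood_ratio_mult) auto
    also have "\<dots> \<le> e * (\<Prod>n<t. p w n)"
      using w by (intro mult_right_mono prod_nonneg P.nonneg) auto
    finally show "1 * (\<Prod>n<t. q w n) \<le> e * (\<Prod>n<t. p w n)"
      by simp
  qed (use assms in auto)
  also have "\<dots> \<le> ennreal e * 1"
    by (intro mult_left_mono P.emeasure_le_1) auto
  finally show ?thesis
    by simp
qed

lemma emeasure_likelihood_ratio_vanishes_le:
  assumes e: "0 < e"
  shows "emeasure Mq {w. likelihood_ratio_vanishes p q w} \<le> ennreal e"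
proof -
  define B where "B N = {w \<in> space Omega_inf.
    \<forall>t\<ge>N. (\<forall>n<t. 0 < p w n) \<and> likelihood_ratio p q w t < e}" for N
  have B_sets: "B N \<in> sets Mq" for N
    unfolding Q.sets_eq B_def by measurable
  have "incseq B"
    unfolding incseq_def B_def by (auto intro: order_trans)
  have "{w. likelihood_ratio_vanishes p q w} \<subseteq> (\<Union>N. B N)"
  proof
    fix w assume "w \<in> {w. likelihood_ratio_vanishes p q w}"
    then have pos: "\<forall>n. 0 < p w n" and "likelihood_ratio p q w \<longlonglongrightarrow> 0"
      by (auto simp: likelihood_ratio_vanishes_def)
    then obtain N where "\<forall>t\<ge>N. dist (likelihood_ratio p q w t) 0 < e"
      using e unfolding lim_sequentially by blast
    then have "w \<in> B N"
      using pos by (auto simp: B_def)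
    then show "w \<in> (\<Union>N. B N)"
      by blast
  qed
  then have "emeasure Mq {w. likelihood_ratio_vanishes p q w} \<le> emeasure Mq (\<Union>N. B N)"
    using B_sets by (intro emeasure_mono) auto
  also have "\<dots> = (SUP N. emeasure Mq (B N))"
    using B_sets \<open>incseq B\<close> by (intro SUP_emeasure_incseq[symmetric]) auto
  also have "\<dots> \<le> ennreal e"
  proof (rule SUP_least)
    fix N
    have "B N \<subseteq> {w. (\<forall>n<N. 0 < p w n) \<and> likelihood_ratio p q w N < e}"
      by (auto simp: B_def)
    then have "emeasure Mq (B N) \<le> emeasure Mq {w. (\<forall>n<N. 0 < p w n) \<and> likelihood_ratio p q w N < e}"
      using sets_prefix_determined[OF prefix_determined_likelihood_ratio_less] Q.sets_eq
      by (intro emeasure_mono) auto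
    also have "\<dots> \<le> ennreal e"
      using e by (intro emeasure_likelihood_ratio_less_le) auto
    finally show "emeasure Mq (B N) \<le> ennreal e" .
  qed
  finally show ?thesis .
qed

lemma null_sets_likelihood_ratio_vanishes:
  "{w. likelihood_ratio_vanishes p q w} \<in> null_sets Mq"
proof -
  have "emeasure Mq {w. likelihood_ratio_vanishes p q w} = 0"
    using ennreal_le_epsilon[of 0 "emeasure Mq {w. likelihood_ratio_vanishes p q w}"]
      emeasure_likelihood_ratio_vanishes_le
    by (simp add: le_zero_eq)
  then show ?thesis
    using sets_likelihood_ratio_vanishes Q.sets_eq by auto
qed

lemma sets_likelihood_ratio_frequently_gt:
  "{w. \<exists>\<^sub>\<infinity>t. e < likelihood_ratio p q w t} \<in> sets Omega_inf"
proof -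
  have "{w \<in> space Omega_inf. \<forall>m. \<exists>t\<ge>m. e < likelihood_ratio p q w t} \<in> sets Omega_inf"
    by measurable
  then show ?thesis
    by (simp add: INFM_nat_le)
qed

lemma sets_likelihood_ratio_gt_between:
  "{w. \<exists>t\<in>{m..<T}. e < likelihood_ratio p q w t} \<in> sets Omega_inf"
proof -
  have "{w \<in> space Omega_inf. \<exists>t\<in>{m..<T}. e < likelihood_ratio p q w t} \<in> sets Omega_inf"
    by measurable
  then show ?thesis
    by simp
qed

lemma scaled_emeasure_le_if_likelihood_ratio_gt:
  assumes E: "prefix_determined t (\<lambda>w. w \<in> E)"
    and gt: "E \<subseteq> {w. e < likelihood_ratio p q w t}" and e: "0 \<le> e"
  shows "ennreal e * emeasure Mp E \<le> emeasure Mq E"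
proof -
  have "ennreal e * emeasure Mp E \<le> ennreal 1 * emeasure Mq E"
    using E
  proof (rule scaled_emeasure_le_prefix_determined[OF P.forecast_measure_axioms Q.forecast_measure_axioms])
    fix w assume "w \<in> E"
    then show "e * (\<Prod>n<t. p w n) \<le> 1 * (\<Prod>n<t. q w n)"
      using gt e by (auto intro: scaled_prod_le_if_likelihood_ratio_gt P.nonneg Q.nonneg)
  qed (use e in auto)
  then show ?thesis
    by simp
qed

lemma maximal_inequality_first_passage:
  assumes B: "prefix_determined m (\<lambda>w. w \<in> B)" and e: "0 \<le> e"
  shows "ennreal e * emeasure Mp (B \<inter> {w. \<exists>t\<in>{m..<T}. e < likelihood_ratio p q w t})
    \<le> emeasure Mq (B \<inter> {w. \<exists>t\<in>{m..<T}. e < likelihood_ratio p q w t})"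
proof (induction T)
  case 0
  then show ?case
    by simp
next
  case (Suc T)
  let ?V = "\<lambda>T. B \<inter> {w. \<exists>t\<in>{m..<T}. e < likelihood_ratio p q w t}"
  show ?case
  proof (cases "m \<le> T")
    case False
    then have "?V (Suc T) = ?V T"
      by (auto simp: less_Suc_eq)
    then show ?thesis
      using Suc.IH by simp
  next
    case True
    define E where "E = B \<inter> {w. e < likelihood_ratio p q w T} - ?V T"
    have V_split: "?V (Suc T) = ?V T \<union> E" and V_disj: "?V T \<inter> E = {}"
      using True by (auto simp: E_def less_Suc_eq)
    have E_determined: "prefix_determined T (\<lambda>w. w \<in> E)"
      unfolding prefix_determined_def
    proof (intro allI impI)
      fix w w' :: seq assume w: "\<forall>k<T. w k = w' k"
      have "likelihood_ratio p q w t = likelihood_ratio p q w' t" if "t \<le> T" for t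
        using prefix_determined_likelihood_ratio[OF P.prefix_determined Q.prefix_determined, of t] w that
        unfolding prefix_determined_def by auto
      moreover have "w \<in> B \<longleftrightarrow> w' \<in> B"
        using B w True unfolding prefix_determined_def by auto
      ultimately show "w \<in> E \<longleftrightarrow> w' \<in> E"
        unfolding E_def by auto
    qed
    have V_sets: "?V T \<in> sets Omega_inf"
      using sets_prefix_determined[OF B] sets_likelihood_ratio_gt_between by auto
    have E_sets: "E \<in> sets Omega_inf"
      by (rule sets_prefix_determined[OF E_determined])
    have "ennreal e * emeasure Mp E \<le> emeasure Mq E"
      by (rule scaled_emeasure_le_if_likelihood_ratio_gt[OF E_determined _ e]) (auto simp: E_def)
    then have "ennreal e * emeasure Mp (?V T) + ennreal e * emeasure Mp E
        \<le> emeasure Mq (?V T) + emeasure Mq E"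
      using Suc.IH by (intro add_mono)
    then show ?thesis
      unfolding V_split using V_sets E_sets V_disj P.sets_eq Q.sets_eq
      by (simp add: plus_emeasure[symmetric] distrib_left)
  qed
qed

lemma maximal_inequality_prefix_determined:
  assumes B: "prefix_determined m (\<lambda>w. w \<in> B)" and e: "0 \<le> e"
  shows "ennreal e * emeasure Mp (B \<inter> {w. \<exists>\<^sub>\<infinity>t. e < likelihood_ratio p q w t}) \<le> emeasure Mq B"
proof -
  let ?V = "\<lambda>T. B \<inter> {w. \<exists>t\<in>{m..<T}. e < likelihood_ratio p q w t}"
  have V_sets: "range ?V \<subseteq> sets Mp"
    using sets_prefix_determined[OF B] sets_likelihood_ratio_gt_between P.sets_eq by auto
  have "incseq ?V"
    by (auto simp: incseq_def)
  have "B \<inter> {w. \<exists>\<^sub>\<infinity>t. e < likelihood_ratio p q w t} \<subseteq> (\<Union>T. ?V T)"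
  proof
    fix w assume "w \<in> B \<inter> {w. \<exists>\<^sub>\<infinity>t. e < likelihood_ratio p q w t}"
    then obtain t where "w \<in> B" "m \<le> t" "e < likelihood_ratio p q w t"
      by (auto simp: INFM_nat_le)
    then have "w \<in> ?V (Suc t)"
      by auto
    then show "w \<in> (\<Union>T. ?V T)"
      by blast
  qed
  then have "ennreal e * emeasure Mp (B \<inter> {w. \<exists>\<^sub>\<infinity>t. e < likelihood_ratio p q w t})
      \<le> ennreal e * emeasure Mp (\<Union>T. ?V T)"
    using sets.countable_nat_UN[OF V_sets] by (intro mult_left_mono emeasure_mono) auto
  also have "\<dots> = ennreal e * (SUP T. emeasure Mp (?V T))"
    using SUP_emeasure_incseq[OF V_sets \<open>incseq ?V\<close>] by (simp only:)
  also have "\<dots> = (SUP T. ennreal e * emeasure Mp (?V T))"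
    by (rule SUP_mult_left_ennreal)
  also have "\<dots> \<le> emeasure Mq B"
  proof (rule SUP_least)
    fix T
    have "ennreal e * emeasure Mp (?V T) \<le> emeasure Mq (?V T)"
      by (rule maximal_inequality_first_passage[OF B e])
    also have "\<dots> \<le> emeasure Mq B"
      using sets_prefix_determined[OF B] Q.sets_eq by (intro emeasure_mono) auto
    finally show "ennreal e * emeasure Mp (?V T) \<le> emeasure Mq B" .
  qed
  finally show ?thesis .
qed

lemma maximal_inequality:
  assumes B: "B \<in> sets Omega_inf" and e: "0 < e"
  shows "e * measure Mp (B \<inter> {w. \<exists>\<^sub>\<infinity>t. e < likelihood_ratio p q w t}) \<le> measure Mq B"
proof (rule field_le_epsilon)
  fix eps :: real assume "0 < eps"
  let ?W = "{w. \<exists>\<^sub>\<infinity>t. e < likelihood_ratio p q w t}"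
  define d where "d = eps / (1 + e)"
  have d: "0 < d" "d + e * d = eps"
  proof -
    show "0 < d"
      using \<open>0 < eps\<close> e by (simp add: d_def)
    have "d + e * d = d * (1 + e)"
      by (simp add: algebra_simps)
    then show "d + e * d = eps"
      using e by (simp add: d_def)
  qed
  obtain C where C: "C \<in> cylinder_sets"
      and CP: "measure Mp (sym_diff B C) < d" and CQ: "measure Mq (sym_diff B C) < d"
    using approx_sigma_sets_by_algebra[OF algebra_cylinder_sets P.finite_measure_axioms _
        Q.finite_measure_axioms _ _ d(1)] B P.sets_eq Q.sets_eq
    unfolding sets_Omega_inf_sigma_cylinder_sets by blast
  then obtain m where C_determined: "prefix_determined m (\<lambda>w. w \<in> C)"
    by (auto simp: cylinder_sets_def)
  have sets: "B \<in> sets Omega_inf" "C \<in> sets Omega_inf" "?W \<in> sets Omega_inf"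
    using B sets_prefix_determined[OF C_determined] sets_likelihood_ratio_frequently_gt by auto
  have "ennreal e * emeasure Mp (C \<inter> ?W) \<le> emeasure Mq C"
    using e by (intro maximal_inequality_prefix_determined[OF C_determined]) auto
  then have C_ineq: "e * measure Mp (C \<inter> ?W) \<le> measure Mq C"
    using e by (simp add: P.emeasure_eq_measure Q.emeasure_eq_measure ennreal_mult[symmetric])
  have "measure Mp (B \<inter> ?W) \<le> measure Mp (C \<inter> ?W) + measure Mp (sym_diff (B \<inter> ?W) (C \<inter> ?W))"
    using sets P.sets_eq by (intro P.measure_le_add_measure_sym_diff) auto
  also have "measure Mp (sym_diff (B \<inter> ?W) (C \<inter> ?W)) \<le> measure Mp (sym_diff B C)"
    using sets P.sets_eq by (intro P.finite_measure_mono) auto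
  finally have "e * measure Mp (B \<inter> ?W) \<le> e * (measure Mp (C \<inter> ?W) + d)"
    using CP e by (intro mult_left_mono) auto
  also have "\<dots> \<le> measure Mq C + e * d"
    using C_ineq by (simp add: distrib_left)
  also have "measure Mq C \<le> measure Mq B + measure Mq (sym_diff C B)"
    using sets Q.sets_eq by (intro Q.measure_le_add_measure_sym_diff) auto
  finally show "e * measure Mp (B \<inter> ?W) \<le> measure Mq B + eps"
    using CQ d(2) by (simp add: Un_commute)
qed

lemma null_sets_likelihood_ratio_frequently_gt:
  assumes A: "A \<in> sets Omega_inf" and null: "emeasure Mq A = 0" and e: "0 < e"
  shows "A \<inter> {w. \<exists>\<^sub>\<infinity>t. e < likelihood_ratio p q w t} \<in> null_sets Mp"
proof -
  let ?N = "A \<inter> {w. \<exists>\<^sub>\<infinity>t. e < likelihood_ratio p q w t}"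
  have "e * measure Mp ?N \<le> measure Mq A"
    using A e by (rule maximal_inequality)
  also have "measure Mq A = 0"
    using null by (simp add: Q.emeasure_eq_measure)
  finally have "measure Mp ?N = 0"
    using e measure_nonneg[of Mp ?N] by (simp add: mult_le_0_iff)
  moreover have "?N \<in> sets Mp"
    using A sets_likelihood_ratio_frequently_gt P.sets_eq by auto
  ultimately show ?thesis
    by (simp add: null_sets_def P.emeasure_eq_measure)
qed

lemma AE_likelihood_ratio_vanishes:
  assumes A: "A \<in> sets Omega_inf" and null: "emeasure Mq A = 0"
  shows "AE w in Mp. w \<in> A \<longrightarrow> likelihood_ratio_vanishes p q w"
proof -
  have "AE w in Mp. \<forall>r::nat. w \<notin> A \<inter> {w. \<exists>\<^sub>\<infinity>t. inverse (Suc r) < likelihood_ratio p q w t}"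
    using A null
    by (subst AE_all_countable) (intro allI AE_not_in null_sets_likelihood_ratio_frequently_gt; simp)
  moreover have "AE w in Mp. \<forall>n. w \<notin> {w. p w n = 0}"
    by (subst AE_all_countable) (intro allI AE_not_in P.null_sets_zero)
  ultimately show ?thesis
  proof eventually_elim
    case (elim w)
    show ?case
    proof
      assume "w \<in> A"
      have "\<forall>\<^sub>\<infinity>t. \<bar>likelihood_ratio p q w t\<bar> \<le> inverse (Suc r)" for r
      proof -
        have "\<forall>\<^sub>\<infinity>t. \<not> inverse (Suc r) < likelihood_ratio p q w t"
          using elim(1) \<open>w \<in> A\<close> by simp
        then show ?thesis
          by (rule MOST_mono) (simp add: likelihood_ratio_nonneg)
      qed
      moreover have "\<forall>n. 0 < p w n"
        using elim(2) P.nonneg[of w] by (simp add: order_less_le)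
      ultimately show "likelihood_ratio_vanishes p q w"
        by (simp add: likelihood_ratio_vanishes_def LIMSEQ_zero_iff_eventually_le_inverse_Suc)
    qed
  qed
qed

end

definition outcome_prob :: "nat \<Rightarrow> strategy \<Rightarrow> strategy \<Rightarrow> seq \<Rightarrow> nat \<Rightarrow> real" where
  "outcome_prob i f0 f1 w n = pmf (strat i f0 f1 (play f0 f1 w n)) (w n)"

lemma prefix_determined_play: "prefix_determined n (\<lambda>w. play f0 f1 w n)"
proof -
  have "(\<forall>k<n. w k = w' k) \<longrightarrow> play f0 f1 w n = play f0 f1 w' n" for w w'
    by (induction n) auto
  then show ?thesis
    unfolding prefix_determined_def by blast
qed

lemma prefix_determined_outcome_prob: "prefix_determined (Suc n) (\<lambda>w. outcome_prob i f0 f1 w n)"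
  unfolding prefix_determined_def
proof (intro allI impI)
  fix w w' :: seq assume w: "\<forall>k<Suc n. w k = w' k"
  then have "play f0 f1 w n = play f0 f1 w' n"
    using prefix_determined_play[of n f0 f1] unfolding prefix_determined_def by simp
  then show "outcome_prob i f0 f1 w n = outcome_prob i f0 f1 w' n"
    using w by (simp add: outcome_prob_def)
qed

lemma forecast_measure_induced_measure:
  assumes "induced_measure f0 f1 i M"
  shows "forecast_measure M (outcome_prob i f0 f1)"
  using assms prefix_determined_outcome_prob
  unfolding induced_measure_def forecast_measure_def forecast_measure_axioms_def outcome_prob_def
  by auto

lemma forecast_pair_induced_measures:
  assumes "induced_measure f0 f1 j Mj" and "induced_measure f0 f1 k Mk"
  shows "forecast_pair Mj (outcome_prob j f0 f1) Mk (outcome_prob k f0 f1)"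
  using assms by (simp add: forecast_pair_def forecast_measure_induced_measure)

lemma deriv_eq_zero_iff_likelihood_ratio_vanishes:
  "deriv_exists f0 f1 j k w \<and> deriv f0 f1 j k w = 0 \<longleftrightarrow>
    likelihood_ratio_vanishes (outcome_prob j f0 f1) (outcome_prob k f0 f1) w"
proof -
  let ?X = "\<lambda>t. ereal (lratio f0 f1 j k w t)"
  have deriv_iff: "deriv_exists f0 f1 j k w \<and> deriv f0 f1 j k w = 0 \<longleftrightarrow>
      upperD f0 f1 j k w = 0 \<and> lowerD f0 f1 j k w = 0"
    unfolding deriv_exists_def deriv_def
    by (cases "upperD f0 f1 j k w") (auto simp: zero_ereal_def)
  show ?thesis
  proof (cases "\<forall>n. 0 < outcome_prob j f0 f1 w n")
    case True
    then have "upperD f0 f1 j k w = limsup ?X" and "lowerD f0 f1 j k w = liminf ?X"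
      by (simp_all add: upperD_def lowerD_def outcome_prob_def)
    moreover have "limsup ?X = 0 \<and> liminf ?X = 0 \<longleftrightarrow> ?X \<longlonglongrightarrow> 0"
      by (auto intro: Liminf_eq_Limsup lim_imp_Limsup lim_imp_Liminf)
    moreover have "?X \<longlonglongrightarrow> 0 \<longleftrightarrow> lratio f0 f1 j k w \<longlonglongrightarrow> 0"
      by (simp add: zero_ereal_def lim_ereal)
    moreover have "lratio f0 f1 j k w = likelihood_ratio (outcome_prob j f0 f1) (outcome_prob k f0 f1) w"
      by (simp add: fun_eq_iff lratio_def likelihood_ratio_def outcome_prob_def)
    ultimately show ?thesis
      using True deriv_iff by (simp add: likelihood_ratio_vanishes_def)
  next
    case False
    then have "upperD f0 f1 j k w = \<infinity>"
      unfolding upperD_def outcome_prob_def by auto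
    then show ?thesis
      using False deriv_iff by (auto simp: likelihood_ratio_vanishes_def)
  qed
qed

lemma derivative_test_eq:
  "derivative_test w f0 f1 =
    (if likelihood_ratio_vanishes (outcome_prob 1 f0 f1) (outcome_prob 0 f0 f1) w then 1
     else if likelihood_ratio_vanishes (outcome_prob 0 f0 f1) (outcome_prob 1 f0 f1) w then 0
     else 1 / 2)"
  by (simp add: derivative_test_def deriv_eq_zero_iff_likelihood_ratio_vanishes)

lemma measurable_derivative_test:
  "(\<lambda>w. derivative_test w f0 f1) \<in> Omega_inf \<rightarrow>\<^sub>M count_space UNIV"
proof -
  have [measurable]: "Measurable.pred Omega_inf
      (likelihood_ratio_vanishes (outcome_prob j f0 f1) (outcome_prob k f0 f1))" for j k
    by (intro measurable_likelihood_ratio_vanishes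
        measurable_prefix_determined[OF prefix_determined_outcome_prob]) auto
  show ?thesis
    unfolding derivative_test_eq by measurable
qed

lemma sets_derivative_test_eq: "{w \<in> space Omega_inf. derivative_test w f0 f1 = c} \<in> sets Omega_inf"
  using measurable_derivative_test[of f0 f1] by measurable

lemma comparison_test_derivative_test: "comparison_test derivative_test"
  unfolding comparison_test_def using measurable_derivative_test
  by (auto simp: derivative_test_def)

lemma error_free_derivative_test:
  assumes P: "\<forall>f0 f1. \<forall>i\<in>{0,1}. induced_measure f0 f1 i (P f0 f1 i)"
  shows "error_free P derivative_test"
  unfolding error_free_def
proof (intro allI ballI)
  fix f0 f1 and i :: nat assume i: "i \<in> {0, 1}"
  interpret forecast_pair "P f0 f1 i" "outcome_prob i f0 f1" "P f0 f1 (1 - i)" "outcome_prob (1 - i) f0 f1"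
    using P i by (intro forecast_pair_induced_measures) auto
  have "{w \<in> space Omega_inf. derivative_test w f0 f1 = real i}
      \<subseteq> {w. likelihood_ratio_vanishes (outcome_prob i f0 f1) (outcome_prob (1 - i) f0 f1) w}"
    using i by (auto simp: derivative_test_eq split: if_splits)
  then have "{w \<in> space Omega_inf. derivative_test w f0 f1 = real i} \<in> null_sets (P f0 f1 (1 - i))"
    using null_sets_likelihood_ratio_vanishes sets_derivative_test_eq Q.sets_eq
    by (blast intro: null_sets_subset)
  then show "emeasure (P f0 f1 (1 - i)) {w \<in> space Omega_inf. derivative_test w f0 f1 = real i} = 0"
    by blast
qed

lemma AE_derivative_test_eq:
  assumes P: "\<forall>f0 f1. \<forall>i\<in>{0,1}. induced_measure f0 f1 i (P f0 f1 i)"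
    and i: "i \<in> {0, 1}" and A: "A \<in> sets Omega_inf" and null: "emeasure (P f0 f1 (1 - i)) A = 0"
  shows "AE w in P f0 f1 i. w \<in> A \<longrightarrow> derivative_test w f0 f1 = real i"
proof -
  interpret direct: forecast_pair "P f0 f1 i" "outcome_prob i f0 f1"
      "P f0 f1 (1 - i)" "outcome_prob (1 - i) f0 f1"
    using P i by (intro forecast_pair_induced_measures) auto
  interpret converse: forecast_pair "P f0 f1 (1 - i)" "outcome_prob (1 - i) f0 f1"
      "P f0 f1 i" "outcome_prob i f0 f1"
    using P i by (intro forecast_pair_induced_measures) auto
  have "AE w in P f0 f1 i. w \<in> A \<longrightarrow>
      likelihood_ratio_vanishes (outcome_prob i f0 f1) (outcome_prob (1 - i) f0 f1) w"
    using A null by (rule direct.AE_likelihood_ratio_vanishes)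
  moreover have "AE w in P f0 f1 i.
      \<not> likelihood_ratio_vanishes (outcome_prob (1 - i) f0 f1) (outcome_prob i f0 f1) w"
    using AE_not_in[OF converse.null_sets_likelihood_ratio_vanishes] by simp
  ultimately show ?thesis
    by eventually_elim (use i in \<open>auto simp: derivative_test_eq\<close>)
qed

lemma reasonable_derivative_test:
  assumes P: "\<forall>f0 f1. \<forall>i\<in>{0,1}. induced_measure f0 f1 i (P f0 f1 i)"
  shows "reasonable P derivative_test"
  unfolding reasonable_def
proof (intro allI ballI impI)
  fix f0 f1 and i :: nat and A
  assume i: "i \<in> {0, 1}" and A: "A \<in> sets Omega_inf"
    and pos: "0 < emeasure (P f0 f1 i) A" and null: "emeasure (P f0 f1 (1 - i)) A = 0"
  let ?T = "{w \<in> space Omega_inf. derivative_test w f0 f1 = real i}"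
  have sets_eq: "sets (P f0 f1 i) = sets Omega_inf"
    using P i by (auto simp: induced_measure_def)
  have "emeasure (P f0 f1 i) A = emeasure (P f0 f1 i) (A \<inter> ?T)"
    using AE_derivative_test_eq[OF P i A null] A sets_derivative_test_eq
    by (intro emeasure_eq_AE) (auto simp: sets_eq)
  then show "0 < emeasure (P f0 f1 i) (A \<inter> ?T)"
    using pos by simp
qed

theorem theorem1:
  fixes P :: "strategy \<Rightarrow> strategy \<Rightarrow> nat \<Rightarrow> seq measure"
  assumes "\<forall>f0 f1. \<forall>i\<in>{0,1}. induced_measure f0 f1 i (P f0 f1 i)"
  shows "comparison_test derivative_test \<and> reasonable P derivative_test \<and> error_free P derivative_test"
  using comparison_test_derivative_test reasonable_derivative_test[OF assms]
    error_free_derivative_test[OF assms]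
  by blast

end
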